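(* Let $x=(x_n)_{n\in\mathbb{Z}}$ be a real-valued sequence and let $i,j$ be two integers in the same connected component of the record graph of $x$. Then $i<j$ in $\mathbb{Z}$ if and only if $i\prec j$ in the RLS order of that component.
   Context: The record map is $R_x(i)=\inf\{n>i: \sum_{l=i}^{n-1}x_l\ge0\}$ if this set is nonempty, and $R_x(i)=i$ otherwise; the record graph has vertex set $\mathbb{Z}$ and directed edges $i\to R_x(i)$ for $R_x(i)\neq i$ (so $R_x(i)$ is the parent of $i$); components are in the undirected sense. Each component is an ordered Family Tree with the children of each vertex ordered by the order of $\mathbb{Z}$. Its RLS order $\prec$: for distinct vertices $u,v$, $u\prec v$ if $v=R_x^k(u)$ for some $k>0$, or if $w=R_x^m(u)=R_x^n(v)$ is their common ancestor with $m,n\ge1$ minimal and $R_x^{m-1}(u)<R_x^{n-1}(v)$ (comparison as children of $w$). *)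

theory Defs
  imports Complex_Main
begin

definition record_map :: "(int \<Rightarrow> real) \<Rightarrow> int \<Rightarrow> int" where
  "record_map x i =
     (if {n. n > i \<and> (\<Sum>l\<in>{i..<n}. x l) \<ge> 0} \<noteq> {}
      then Inf {n. n > i \<and> (\<Sum>l\<in>{i..<n}. x l) \<ge> 0}
      else i)"

definition record_edges :: "(int \<Rightarrow> real) \<Rightarrow> (int \<times> int) set" where
  "record_edges x = {(i, record_map x i) | i. record_map x i \<noteq> i}"

definition same_component :: "(int \<Rightarrow> real) \<Rightarrow> int \<Rightarrow> int \<Rightarrow> bool" where
  "same_component x i j \<longleftrightarrow> (i, j) \<in> (record_edges x \<union> (record_edges x)\<inverse>)\<^sup>*"

definition rls_less :: "(int \<Rightarrow> real) \<Rightarrow> int \<Rightarrow> int \<Rightarrow> bool" where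
  "rls_less x u v \<longleftrightarrow> u \<noteq> v \<and>
     ((\<exists>k>0. v = (record_map x ^^ k) u) \<or>
      (\<exists>m n. m \<ge> 1 \<and> n \<ge> 1 \<and> (record_map x ^^ m) u = (record_map x ^^ n) v \<and>
         (\<forall>m' n'. m' \<ge> 1 \<longrightarrow> n' \<ge> 1 \<longrightarrow>
             (record_map x ^^ m') u = (record_map x ^^ n') v \<longrightarrow> m \<le> m' \<and> n \<le> n') \<and>
         (record_map x ^^ (m - 1)) u < (record_map x ^^ (n - 1)) v))"

end

theory Submission
  imports Defs
begin

(* Edges of the record graph do not cross: for c < a < R c the partial sum from c is
   negative at a but nonnegative at R c, so the sum from a to R c is nonnegative and
   R a <= R c.  Hence no vertex a >= d below a point of the orbit of d can jump over it.
   Now let u and v first meet at w, entering it through the children a = R^(m-1) u and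
   b = R^(n-1) v.  If a < b but v <= u, then v <= a < b forces R a <= b <= R b = R a, so
   the orbit of u already passes through b, contradicting minimality.  Thus the order of
   the children decides the order of u and v; ancestors lie to the right since R i >= i. *)

lemma int_Inf_mem:
  fixes X :: "int set"
  assumes "X \<noteq> {}" "bdd_below X"
  shows "Inf X \<in> X"
proof -
  obtain b where b: "\<And>y. y \<in> X \<Longrightarrow> b \<le> y" using assms(2) by (auto simp: bdd_below_def)
  obtain y where y: "y \<in> X" using assms(1) by auto
  define F where "F = X \<inter> {b..y}"
  have F: "finite F" "F \<noteq> {}" "F \<subseteq> X" using y b unfolding F_def by auto
  have "Inf X = Min F"
  proof (rule cInf_eq_minimum)
    show "Min F \<in> X" using F Min_in by blast
    show "Min F \<le> z" if "z \<in> X" for z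
    proof (cases "z \<le> y")
      case True
      then show ?thesis using that b F(1) by (simp add: F_def)
    next
      case False
      have "Min F \<le> y" using y b F(1) by (simp add: F_def)
      then show ?thesis using False by simp
    qed
  qed
  then show ?thesis using F Min_in by auto
qed

abbreviation partial_sum :: "(int \<Rightarrow> real) \<Rightarrow> int \<Rightarrow> int \<Rightarrow> real" where
  "partial_sum x a b \<equiv> \<Sum>l\<in>{a..<b}. x l"

lemma partial_sum_split:
  assumes "a \<le> b" "b \<le> c"
  shows "partial_sum x a c = partial_sum x a b + partial_sum x b c"
proof -
  have "{a..<c} = {a..<b} \<union> {b..<c}" using assms by auto
  then show ?thesis by (simp add: sum.union_disjoint)
qed

lemma bdd_below_records: "bdd_below {n. i < n \<and> 0 \<le> partial_sum x i n}"
  by (rule bdd_belowI[of _ i]) simp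

lemma record_map_eq_Inf:
  assumes "i < n" "0 \<le> partial_sum x i n"
  shows "record_map x i = Inf {n. i < n \<and> 0 \<le> partial_sum x i n}"
  using assms by (auto simp: record_map_def)

lemma record_map_least:
  assumes "i < n" "0 \<le> partial_sum x i n"
  shows "record_map x i \<le> n"
  unfolding record_map_eq_Inf[OF assms] using assms bdd_below_records by (simp add: cInf_lower)

lemma record_map_is_record:
  assumes "i < n" "0 \<le> partial_sum x i n"
  shows "i < record_map x i \<and> 0 \<le> partial_sum x i (record_map x i)"
  using int_Inf_mem[OF _ bdd_below_records] assms unfolding record_map_eq_Inf[OF assms] by blast

lemma record_map_fixed:
  "(\<And>n. i < n \<Longrightarrow> partial_sum x i n < 0) \<Longrightarrow> record_map x i = i"
  by (force simp: record_map_def)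

lemma record_map_ge: "i \<le> record_map x i"
proof (cases "\<exists>n>i. 0 \<le> partial_sum x i n")
  case True
  then show ?thesis using record_map_is_record by fastforce
next
  case False
  then show ?thesis using record_map_fixed[of i x] by (simp add: not_le)
qed

lemma record_map_sum_nonneg:
  assumes "i < record_map x i"
  shows "0 \<le> partial_sum x i (record_map x i)"
proof (cases "\<exists>n>i. 0 \<le> partial_sum x i n")
  case True
  then show ?thesis using record_map_is_record by blast
next
  case False
  then show ?thesis using record_map_fixed[of i x] assms by (simp add: not_le)
qed

lemma record_map_nested:
  assumes "c < a" "a < record_map x c"
  shows "record_map x a \<le> record_map x c"
proof -
  have "partial_sum x c a < 0" using record_map_least[of c a x] assms by fastforce
  moreover have "0 \<le> partial_sum x c (record_map x c)" using record_map_sum_nonneg assms by fastforce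
  moreover have "partial_sum x c (record_map x c) = partial_sum x c a + partial_sum x a (record_map x c)"
    using partial_sum_split assms by simp
  ultimately have "0 \<le> partial_sum x a (record_map x c)" by linarith
  then show ?thesis using record_map_least assms(2) by blast
qed

lemma funpow_record_map_mono: "k \<le> l \<Longrightarrow> (record_map x ^^ k) i \<le> (record_map x ^^ l) i"
  by (rule lift_Suc_mono_le[of "\<lambda>k. (record_map x ^^ k) i"]) (simp_all add: record_map_ge)

lemma funpow_record_map_ge: "i \<le> (record_map x ^^ k) i"
  using funpow_record_map_mono[of 0 k x i] by simp

lemma record_map_le_funpow:
  assumes "d \<le> a" "a < (record_map x ^^ k) d"
  shows "record_map x a \<le> (record_map x ^^ k) d"
  using assms(2)
proof (induction k)
  case 0
  then show ?case using assms(1) by simp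
next
  case (Suc k)
  define c where "c = (record_map x ^^ k) d"
  have "a < record_map x c" using Suc.prems by (simp add: c_def)
  consider "a < c" | "a = c" | "c < a" by linarith
  then have "record_map x a \<le> record_map x c"
  proof cases
    case 1
    then have "record_map x a \<le> c" using Suc.IH by (simp add: c_def)
    then show ?thesis using record_map_ge order.trans by blast
  next
    case 3
    then show ?thesis using record_map_nested \<open>a < record_map x c\<close> by blast
  qed simp
  then show ?case by (simp add: c_def)
qed

lemma same_component_common_ancestor:
  assumes "same_component x i j"
  shows "\<exists>a b. (record_map x ^^ a) i = (record_map x ^^ b) j"
proof -
  have "(i, j) \<in> (record_edges x \<union> (record_edges x)\<inverse>)\<^sup>*"
    using assms unfolding same_component_def .
  then show ?thesis
  proof (induction rule: rtrancl_induct)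
    case base
    show ?case by (metis funpow_0)
  next
    case (step y z)
    then obtain a b where ab: "(record_map x ^^ a) i = (record_map x ^^ b) y" by blast
    from step(2) consider "z = record_map x y" | "y = record_map x z"
      unfolding record_edges_def by auto
    then show ?case
    proof cases
      case 1
      show ?thesis
      proof (cases b)
        case 0
        then have "(record_map x ^^ Suc a) i = (record_map x ^^ 0) z" using ab 1 by simp
        then show ?thesis by blast
      next
        case (Suc b')
        then have "(record_map x ^^ a) i = (record_map x ^^ b') z"
          using ab 1 by (simp add: funpow_swap1)
        then show ?thesis by blast
      qed
    next
      case 2
      then have "(record_map x ^^ a) i = (record_map x ^^ Suc b) z" using ab by (simp add: funpow_swap1)
      then show ?thesis by blast
    qed
  qed
qed

definition meets :: "(int \<Rightarrow> real) \<Rightarrow> int \<Rightarrow> int \<Rightarrow> nat \<Rightarrow> nat \<Rightarrow> bool" where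
  "meets x u v m n \<longleftrightarrow> m \<ge> 1 \<and> n \<ge> 1 \<and> (record_map x ^^ m) u = (record_map x ^^ n) v"

definition first_meet :: "(int \<Rightarrow> real) \<Rightarrow> int \<Rightarrow> int \<Rightarrow> nat \<Rightarrow> nat \<Rightarrow> bool" where
  "first_meet x u v m n \<longleftrightarrow> meets x u v m n \<and> (\<forall>m' n'. meets x u v m' n' \<longrightarrow> m \<le> m' \<and> n \<le> n')"

lemma rls_less_iff_first_meet:
  "rls_less x u v \<longleftrightarrow> u \<noteq> v \<and> ((\<exists>k>0. v = (record_map x ^^ k) u) \<or>
     (\<exists>m n. first_meet x u v m n \<and> (record_map x ^^ (m - 1)) u < (record_map x ^^ (n - 1)) v))"
  unfolding rls_less_def first_meet_def meets_def by blast

lemma first_meet_commute: "first_meet x u v m n \<longleftrightarrow> first_meet x v u n m"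
  unfolding first_meet_def meets_def by metis

lemma first_meet_exists:
  assumes "(record_map x ^^ a) u = (record_map x ^^ b) v"
  shows "\<exists>m n. first_meet x u v m n"
proof -
  let ?R = "record_map x"
  have "meets x u v (Suc a) (Suc b)"
    using assms by (simp add: meets_def funpow_swap1)
  then have ex_m: "\<exists>m n. meets x u v m n" and ex_n: "\<exists>n m. meets x u v m n" by blast+
  define m where "m = (LEAST m. \<exists>n. meets x u v m n)"
  define n where "n = (LEAST n. \<exists>m. meets x u v m n)"
  obtain n' where n': "meets x u v m n'" using LeastI_ex[OF ex_m] unfolding m_def by blast
  obtain m' where m': "meets x u v m' n" using LeastI_ex[OF ex_n] unfolding n_def by blast
  have least: "m \<le> m'' \<and> n \<le> n''" if "meets x u v m'' n''" for m'' n''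
    using that unfolding m_def n_def by (blast intro: Least_le)
  \<comment> \<open>the separately minimised indices form a meeting pair because orbits are nondecreasing\<close>
  have "(?R ^^ n) v \<le> (?R ^^ n') v" using least[OF n'] funpow_record_map_mono by blast
  moreover have "(?R ^^ m) u \<le> (?R ^^ m') u" using least[OF m'] funpow_record_map_mono by blast
  ultimately have "(?R ^^ m) u = (?R ^^ n) v" using m' n' by (simp add: meets_def)
  then have "meets x u v m n" using m' n' by (simp add: meets_def)
  then show ?thesis using least unfolding first_meet_def by blast
qed

lemma first_meet_children_less_imp_less:
  assumes meet: "first_meet x u v m n"
    and children: "(record_map x ^^ (m - 1)) u < (record_map x ^^ (n - 1)) v"
  shows "u < v"
proof (rule ccontr)
  let ?R = "record_map x"
  assume "\<not> u < v"
  obtain m' n' where m': "m = Suc m'" and n': "n = Suc n'"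
    using meet by (cases m; cases n) (auto simp: first_meet_def meets_def)
  define a b where "a = (?R ^^ m') u" and "b = (?R ^^ n') v"
  have "a < b" using children by (simp add: a_def b_def m' n')
  have "v \<le> a" using \<open>\<not> u < v\<close> funpow_record_map_ge[where i=u and k=m' and x=x] by (simp add: a_def)
  then have "?R a \<le> b" using record_map_le_funpow \<open>a < b\<close> by (simp add: b_def)
  moreover have "?R a = ?R b"
    using meet by (simp add: a_def b_def m' n' first_meet_def meets_def)
  ultimately have "b = (?R ^^ m) u" using record_map_ge[where i=b and x=x] by (simp add: a_def m')
  show False
  proof (cases "n' = 0")
    case True
    then show False using \<open>v \<le> a\<close> \<open>a < b\<close> by (simp add: b_def)
  next
    case False
    then have "meets x u v m n'" using \<open>b = (?R ^^ m) u\<close> m' by (simp add: meets_def b_def)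
    then show False using meet n' unfolding first_meet_def by fastforce
  qed
qed

lemma first_meet_children_eq:
  assumes meet: "first_meet x u v m n"
    and children: "(record_map x ^^ (m - 1)) u = (record_map x ^^ (n - 1)) v"
  shows "u = v \<or> (\<exists>k>0. u = (record_map x ^^ k) v) \<or> (\<exists>k>0. v = (record_map x ^^ k) u)"
proof -
  have "m \<ge> 1" "n \<ge> 1" using meet by (simp_all add: first_meet_def meets_def)
  consider "m = 1" | "n = 1" | "m > 1" "n > 1" using \<open>m \<ge> 1\<close> \<open>n \<ge> 1\<close> by linarith
  then show ?thesis
  proof cases
    case 1
    then have "u = (record_map x ^^ (n - 1)) v" using children by simp
    then show ?thesis by (metis funpow_0 neq0_conv)
  next
    case 2
    then have "v = (record_map x ^^ (m - 1)) u" using children by simp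
    then show ?thesis by (metis funpow_0 neq0_conv)
  next
    case 3
    then have "meets x u v (m - 1) (n - 1)" using children by (simp add: meets_def) arith
    then have "m \<le> m - 1" using meet by (simp add: first_meet_def)
    then show ?thesis using 3 by simp
  qed
qed

lemma rls_less_imp_less:
  assumes "rls_less x u v"
  shows "u < v"
proof -
  consider "u \<noteq> v" "\<exists>k>0. v = (record_map x ^^ k) u"
    | m n where "first_meet x u v m n" "(record_map x ^^ (m - 1)) u < (record_map x ^^ (n - 1)) v"
    using assms unfolding rls_less_iff_first_meet by blast
  then show ?thesis
  proof cases
    case 1
    then show ?thesis using funpow_record_map_ge order_le_neq_trans by metis
  next
    case 2
    then show ?thesis by (rule first_meet_children_less_imp_less)
  qed
qed

lemma first_meet_less_imp_rls_less:
  assumes meet: "first_meet x u v m n" and "u < v"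
  shows "rls_less x u v"
proof (cases "\<exists>k>0. v = (record_map x ^^ k) u")
  case True
  then show ?thesis using \<open>u < v\<close> by (simp add: rls_less_iff_first_meet)
next
  case False
  have "\<not> (\<exists>k>0. u = (record_map x ^^ k) v)"
    using funpow_record_map_ge \<open>u < v\<close> by (metis leD)
  then have "(record_map x ^^ (m - 1)) u \<noteq> (record_map x ^^ (n - 1)) v"
    using first_meet_children_eq[OF meet] False \<open>u < v\<close> by blast
  moreover have "\<not> (record_map x ^^ (n - 1)) v < (record_map x ^^ (m - 1)) u"
    using first_meet_children_less_imp_less[of x v u n m] meet \<open>u < v\<close>
    by (auto simp: first_meet_commute)
  ultimately have "(record_map x ^^ (m - 1)) u < (record_map x ^^ (n - 1)) v" by simp
  then show ?thesis using meet \<open>u < v\<close> unfolding rls_less_iff_first_meet by blast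
qed

theorem lemma2p22:
  fixes x :: "int \<Rightarrow> real" and i j :: int
  assumes "same_component x i j"
  shows "i < j \<longleftrightarrow> rls_less x i j"
proof
  assume "i < j"
  obtain m n where "first_meet x i j m n"
    using same_component_common_ancestor[OF assms] first_meet_exists by blast
  then show "rls_less x i j" using \<open>i < j\<close> by (rule first_meet_less_imp_rls_less)
qed (rule rls_less_imp_less)

end
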